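(* Let $D$ be an integer which is not a perfect square, let $p\neq 2$ be a prime with $p\mid D$ and $p^2\nmid D$, and let $l\geq 1$. Let $A,B\in\mathbb{Z}$ be such that $p^{l+1}$ divides none of $A$, $B$, $A-B$, $G(A,B)$. Then $S^{(D;A,B)}(\mathbb{Q}_p)\neq\emptyset$ if and only if the pair $(A \bmod p^{8l+1}, B \bmod p^{8l+1})$ lies in $\mathcal{R}_l(p)$.
   Context: $S^{(D;A,B)}\subset\mathbb{P}^4_{\mathbb{Q}}$ is defined by $Q_1(\mathbf{t})=Q_2(\mathbf{t})=0$ where $Q_1(\mathbf{t})=t_2^2-Dt_3^2-t_0t_1$ and $Q_2(\mathbf{t})=t_2^2-Dt_4^2-(t_0+At_1)(t_0+Bt_1)$. $G(A,B)=A^2-2AB+B^2-2A-2B+1$. For a prime $p$ and $l\geq 1$, $\mathcal{R}_l(p)$ is the set of pairs of residue classes $(A,B)$ modulo $p^{8l+1}$ such that $p^{l+1}$ divides none of $A,B,A-B,G(A,B)$ and the congruences $Q_1(\mathbf{t})\equiv Q_2(\mathbf{t})\equiv 0\pmod{p^{8l+1}}$ have a solution $\mathbf{t}\in(\mathbb{Z}/p^{8l+1}\mathbb{Z})^5$ whose components are not all divisible by $p$. *)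

theory Defs
  imports "HOL-Number_Theory.Number_Theory"
begin

definition Q1 :: "int \<Rightarrow> int \<Rightarrow> int \<Rightarrow> int \<Rightarrow> int \<Rightarrow> int \<Rightarrow> int" where
  "Q1 D t0 t1 t2 t3 t4 = t2^2 - D * t3^2 - t0 * t1"

definition Q2 :: "int \<Rightarrow> int \<Rightarrow> int \<Rightarrow> int \<Rightarrow> int \<Rightarrow> int \<Rightarrow> int \<Rightarrow> int \<Rightarrow> int" where
  "Q2 D A B t0 t1 t2 t3 t4 = t2^2 - D * t4^2 - (t0 + A * t1) * (t0 + B * t1)"

definition G :: "int \<Rightarrow> int \<Rightarrow> int" where
  "G A B = A^2 - 2*A*B + B^2 - 2*A - 2*B + 1"

text \<open>p-adic integers as coherent sequences of residues: x n is the residue modulo p^n.\<close>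
definition padic_int :: "int \<Rightarrow> (nat \<Rightarrow> int) \<Rightarrow> bool" where
  "padic_int p x \<longleftrightarrow> (\<forall>n. 0 \<le> x n \<and> x n < p^n) \<and> (\<forall>n. [x (Suc n) = x n] (mod p^n))"

text \<open>S^(D;A,B)(Q_p) is nonempty: there is a nonzero vector (t_0,...,t_4) of p-adic numbers
  with Q1 = Q2 = 0. Since the equations are homogeneous, denominators can be cleared, so
  this is expressed with p-adic integers t i (i < 5), the equations holding modulo every p^n.\<close>
definition has_Qp_point :: "int \<Rightarrow> int \<Rightarrow> int \<Rightarrow> int \<Rightarrow> bool" where
  "has_Qp_point p D A B \<longleftrightarrow>
     (\<exists>t :: nat \<Rightarrow> nat \<Rightarrow> int.
        (\<forall>i<5. padic_int p (t i)) \<and>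
        (\<exists>i<5. \<exists>n. t i n \<noteq> 0) \<and>
        (\<forall>n. [Q1 D (t 0 n) (t 1 n) (t 2 n) (t 3 n) (t 4 n) = 0] (mod p^n)) \<and>
        (\<forall>n. [Q2 D A B (t 0 n) (t 1 n) (t 2 n) (t 3 n) (t 4 n) = 0] (mod p^n)))"

text \<open>R_l(p): residue classes modulo p^(8l+1), represented by integers in [0, p^(8l+1)).\<close>
definition R_set :: "int \<Rightarrow> int \<Rightarrow> nat \<Rightarrow> (int \<times> int) set" where
  "R_set D p l = (let M = p^(8*l+1) in
     {(A, B). 0 \<le> A \<and> A < M \<and> 0 \<le> B \<and> B < M \<and>
        \<not> p^(l+1) dvd A \<and> \<not> p^(l+1) dvd B \<and> \<not> p^(l+1) dvd (A - B) \<and>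
        \<not> p^(l+1) dvd G A B \<and>
        (\<exists>t0 t1 t2 t3 t4. \<not> (p dvd t0 \<and> p dvd t1 \<and> p dvd t2 \<and> p dvd t3 \<and> p dvd t4) \<and>
           [Q1 D t0 t1 t2 t3 t4 = 0] (mod M) \<and> [Q2 D A B t0 t1 t2 t3 t4 = 0] (mod M))})"

end

theory Submission
  imports Defs
begin

text \<open>A Q_p-point can be scaled to a primitive point with p-adic integer coordinates, which
  reduces to a primitive solution modulo p^(8l+1). Conversely, for a primitive solution modulo
  p^(8l+1) some 2x2 minor of the Jacobian of (Q1, Q2) has p-adic valuation e \<le> 4l: if all of
  them were divisible by p^(4l+1), the bounds on A, B, A - B and G(A,B) would force p to divide
  every coordinate. Hensel's lemma in the two corresponding coordinates then lifts this solution
  modulo p^(2e+1) to a p-adic point. Finally, membership in R_l(p) only depends on A and B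
  modulo p^(8l+1).\<close>

lemma prime_power_dvd_iff_le_multiplicity:
  fixes p x :: int
  shows "prime p \<Longrightarrow> x \<noteq> 0 \<Longrightarrow> p^n dvd x \<longleftrightarrow> n \<le> multiplicity p x"
  by (rule power_dvd_iff_le_multiplicity) auto

lemma prime_power_dvd_mult_cancel_right:
  fixes p x y :: int
  assumes p: "prime p" and dvd: "p^(m+n) dvd x*y" and y: "\<not> p^(Suc n) dvd y"
  shows "p^m dvd x"
proof (cases "x = 0")
  case False
  have "y \<noteq> 0" using y by auto
  with p False have "multiplicity p (x*y) = multiplicity p x + multiplicity p y"
    by (intro prime_elem_multiplicity_mult_distrib) auto
  moreover have "m + n \<le> multiplicity p (x*y)" "\<not> Suc n \<le> multiplicity p y"
    using dvd y p False \<open>y \<noteq> 0\<close>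
    by (simp_all add: prime_power_dvd_iff_le_multiplicity del: power_Suc)
  ultimately show ?thesis
    using p False by (simp add: prime_power_dvd_iff_le_multiplicity)
qed simp

lemma prime_power_double_dvd_mult:
  fixes p x y :: int
  assumes p: "prime p" and dvd: "p^(2*m) dvd x*y"
  shows "p^m dvd x \<or> p^m dvd y"
proof (cases "x = 0 \<or> y = 0")
  case False
  with p have "multiplicity p (x*y) = multiplicity p x + multiplicity p y"
    by (intro prime_elem_multiplicity_mult_distrib) auto
  moreover have "2*m \<le> multiplicity p (x*y)"
    using dvd p False by (simp add: prime_power_dvd_iff_le_multiplicity)
  ultimately show ?thesis
    using p False by (auto simp add: prime_power_dvd_iff_le_multiplicity)
qed auto

lemma odd_prime_power_dvd_double:
  fixes p x :: int
  assumes "prime p" "p \<noteq> 2" "p^n dvd 2*x"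
  shows "p^n dvd x"
proof -
  have "coprime (p^n) 2"
    using assms(1,2) primes_coprime[of p 2] by (simp add: coprime_commute)
  then show ?thesis using assms(3) coprime_dvd_mult_right_iff by blast
qed

lemma exact_power_dvd_exists:
  fixes p M :: int
  assumes p: "prime p" and M: "\<not> p^(k+1) dvd M"
  obtains e where "e \<le> k" "p^e dvd M" "\<not> p^(e+1) dvd M"
proof
  have "M \<noteq> 0" using M by auto
  then show "multiplicity p M \<le> k" "\<not> p^(multiplicity p M + 1) dvd M"
    using M p by (auto simp: prime_power_dvd_iff_le_multiplicity simp del: power_Suc)
qed (rule multiplicity_dvd)

section \<open>Hensel's lemma for two quadratic forms\<close>

definition jacobian_minor ::
    "((nat \<Rightarrow> int) \<Rightarrow> nat \<Rightarrow> int) \<Rightarrow> ((nat \<Rightarrow> int) \<Rightarrow> nat \<Rightarrow> int) \<Rightarrow> nat \<Rightarrow> nat \<Rightarrow> (nat \<Rightarrow> int) \<Rightarrow> int" where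
  "jacobian_minor g1 g2 i j t = g1 t i * g2 t j - g1 t j * g2 t i"

lemma sum_two_point:
  fixes f :: "nat \<Rightarrow> int"
  assumes "i < n" "j < n" "i \<noteq> j"
  shows "(\<Sum>k<n. f k * (if k = i then x else if k = j then y else 0)) = f i * x + f j * y"
proof -
  have "f k * (if k = i then x else if k = j then y else 0)
      = (if k = i then f i * x else 0) + (if k = j then f j * y else 0)" for k
    using assms(3) by simp
  then show ?thesis using assms(1,2) by (simp add: sum.distrib)
qed

lemma Hensel_correction_dvd:
  fixes p w u q r :: int
  assumes "p dvd 1 - u" "p^(Suc m) dvd q^2"
  shows "p^(Suc m) dvd p^m * w * (1 - u) + q^2 * r"
proof -
  obtain v where "1 - u = p * v" using assms(1) by blast
  then have "p^m * w * (1 - u) = p^(Suc m) * (w * v)" by (simp add: ac_simps)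
  then show ?thesis using assms(2) by (metis dvd_add dvd_mult2 dvd_triv_left)
qed

text \<open>The correction is found by Cramer's rule in the 2x2 Jacobian minor; its valuation e is
  absorbed because m \<ge> 2e+1.\<close>
lemma quadratic_forms_Hensel_step:
  fixes F1 F2 :: "(nat \<Rightarrow> int) \<Rightarrow> int" and g1 g2 :: "(nat \<Rightarrow> int) \<Rightarrow> nat \<Rightarrow> int"
  assumes p: "prime p"
    and polar1: "\<And>t s q. F1 (\<lambda>k. t k + q * s k) = F1 t + q * (\<Sum>k<n. g1 t k * s k) + q^2 * F1 s"
    and polar2: "\<And>t s q. F2 (\<lambda>k. t k + q * s k) = F2 t + q * (\<Sum>k<n. g2 t k * s k) + q^2 * F2 s"
    and ij: "i < n" "j < n" "i \<noteq> j"
    and J: "p^e dvd jacobian_minor g1 g2 i j t" "\<not> p^(e+1) dvd jacobian_minor g1 g2 i j t"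
    and m: "2*e + 1 \<le> m"
    and sol: "[F1 t = 0] (mod p^m)" "[F2 t = 0] (mod p^m)"
  shows "\<exists>t'. (\<forall>k. [t' k = t k] (mod p^(m-e))) \<and>
    [F1 t' = 0] (mod p^(Suc m)) \<and> [F2 t' = 0] (mod p^(Suc m))"
proof -
  obtain w1 w2 where w: "F1 t = p^m * w1" "F2 t = p^m * w2"
    using sol unfolding cong_0_iff by (metis dvdE)
  obtain j0 where j0: "jacobian_minor g1 g2 i j t = p^e * j0" using J(1) by blast
  have "\<not> p dvd j0" using J(2) j0 by (auto simp: mult_dvd_mono)
  then obtain u where u: "[j0 * u = 1] (mod p)"
    using p cong_solve_coprime_int prime_imp_coprime coprime_commute by metis
  then have "p dvd 1 - j0 * u" by (metis cong_iff_dvd_diff cong_sym)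
  define q where "q = p^(m-e)"
  have "q * p^e = p^m" using m unfolding q_def power_add[symmetric] by simp
  then have qJ: "q * jacobian_minor g1 g2 i j t = p^m * j0" by (simp add: j0 ac_simps)
  have "q^2 = p^((m-e)*2)" "Suc m \<le> (m-e)*2" unfolding q_def using m by (simp_all add: power_mult)
  then have q2: "p^(Suc m) dvd q^2" by (metis le_imp_power_dvd)
  define x where "x = - u * (g2 t j * w1 - g1 t j * w2)"
  define y where "y = - u * (g1 t i * w2 - g2 t i * w1)"
  define s where "s = (\<lambda>k. if k = i then x else if k = j then y else 0)"
  have lin1: "q * (\<Sum>k<n. g1 t k * s k) = - (p^m * j0 * u * w1)"
    unfolding s_def sum_two_point[OF ij] qJ[symmetric] x_def y_def jacobian_minor_def
    by (simp add: algebra_simps)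
  have lin2: "q * (\<Sum>k<n. g2 t k * s k) = - (p^m * j0 * u * w2)"
    unfolding s_def sum_two_point[OF ij] qJ[symmetric] x_def y_def jacobian_minor_def
    by (simp add: algebra_simps)
  show ?thesis
  proof (intro exI conjI allI)
    show "[t k + q * s k = t k] (mod p^(m-e))" for k unfolding q_def by (simp add: cong_iff_dvd_diff)
    have "F1 (\<lambda>k. t k + q * s k) = p^m * w1 * (1 - j0 * u) + q^2 * F1 s"
      unfolding polar1 lin1 w by (simp add: algebra_simps)
    then show "[F1 (\<lambda>k. t k + q * s k) = 0] (mod p^(Suc m))"
      using Hensel_correction_dvd[OF \<open>p dvd 1 - j0 * u\<close> q2] by (simp add: cong_0_iff)
    have "F2 (\<lambda>k. t k + q * s k) = p^m * w2 * (1 - j0 * u) + q^2 * F2 s"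
      unfolding polar2 lin2 w by (simp add: algebra_simps)
    then show "[F2 (\<lambda>k. t k + q * s k) = 0] (mod p^(Suc m))"
      using Hensel_correction_dvd[OF \<open>p dvd 1 - j0 * u\<close> q2] by (simp add: cong_0_iff)
  qed
qed

lemma jacobian_minor_cong:
  assumes "\<And>k. k \<in> {i, j} \<Longrightarrow> [g1 t' k = g1 t k] (mod M) \<and> [g2 t' k = g2 t k] (mod M)"
  shows "[jacobian_minor g1 g2 i j t' = jacobian_minor g1 g2 i j t] (mod M)"
  unfolding jacobian_minor_def using assms by (intro cong_diff cong_mult) auto

lemma quadratic_forms_Hensel:
  fixes F1 F2 :: "(nat \<Rightarrow> int) \<Rightarrow> int" and g1 g2 :: "(nat \<Rightarrow> int) \<Rightarrow> nat \<Rightarrow> int"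
  assumes p: "prime p"
    and polar1: "\<And>t s q. F1 (\<lambda>k. t k + q * s k) = F1 t + q * (\<Sum>k<n. g1 t k * s k) + q^2 * F1 s"
    and polar2: "\<And>t s q. F2 (\<lambda>k. t k + q * s k) = F2 t + q * (\<Sum>k<n. g2 t k * s k) + q^2 * F2 s"
    and grad_cong: "\<And>t t' M k. k < n \<Longrightarrow> (\<And>k. [t' k = t k] (mod M)) \<Longrightarrow>
      [g1 t' k = g1 t k] (mod M) \<and> [g2 t' k = g2 t k] (mod M)"
    and ij: "i < n" "j < n" "i \<noteq> j"
    and J: "p^e dvd jacobian_minor g1 g2 i j t" "\<not> p^(e+1) dvd jacobian_minor g1 g2 i j t"
    and sol: "[F1 t = 0] (mod p^(2*e+1))" "[F2 t = 0] (mod p^(2*e+1))"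
  shows "\<exists>X. \<forall>m. (\<forall>k. [X m k = t k] (mod p^(e+1))) \<and> (\<forall>k. [X (Suc m) k = X m k] (mod p^(m+e+1))) \<and>
    [F1 (X m) = 0] (mod p^(m+2*e+1)) \<and> [F2 (X m) = 0] (mod p^(m+2*e+1))"
proof -
  define P where "P m x \<longleftrightarrow> (\<forall>k. [x k = t k] (mod p^(e+1))) \<and>
    [F1 x = 0] (mod p^(m+2*e+1)) \<and> [F2 x = 0] (mod p^(m+2*e+1))" for m x
  have step: "\<exists>y. P (Suc m) y \<and> (\<forall>k. [y k = x k] (mod p^(m+e+1)))" if "P m x" for m x
  proof -
    have x: "\<forall>k. [x k = t k] (mod p^(e+1))" "[F1 x = 0] (mod p^(m+2*e+1))" "[F2 x = 0] (mod p^(m+2*e+1))"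
      using that unfolding P_def by blast+
    have c: "[jacobian_minor g1 g2 i j x = jacobian_minor g1 g2 i j t] (mod p^(e+1))"
    proof (rule jacobian_minor_cong)
      show "[g1 x k = g1 t k] (mod p^(e+1)) \<and> [g2 x k = g2 t k] (mod p^(e+1))" if "k \<in> {i, j}" for k
        using grad_cong[of k x t "p^(e+1)"] x(1) that ij by blast
    qed
    then have "[jacobian_minor g1 g2 i j x = jacobian_minor g1 g2 i j t] (mod p^e)"
      by (rule cong_dvd_modulus) (simp add: le_imp_power_dvd)
    then have "p^e dvd jacobian_minor g1 g2 i j x" "\<not> p^(e+1) dvd jacobian_minor g1 g2 i j x"
      using J c cong_dvd_iff by blast+
    moreover have "2*e + 1 \<le> m+2*e+1" by simp
    ultimately obtain y where y0: "\<forall>k. [y k = x k] (mod p^(m+2*e+1-e))"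
        "[F1 y = 0] (mod p^(Suc (m+2*e+1)))" "[F2 y = 0] (mod p^(Suc (m+2*e+1)))"
      using quadratic_forms_Hensel_step[OF p polar1 polar2 ij, of e x "m+2*e+1"] x(2,3) by blast
    have "m+2*e+1 - e = m+e+1" "Suc (m+2*e+1) = Suc m+2*e+1" by simp_all
    note y = y0[unfolded this]
    have "[y k = t k] (mod p^(e+1))" for k
    proof -
      have "[y k = x k] (mod p^(m+e+1))" using y(1) by blast
      then have "[y k = x k] (mod p^(e+1))" by (rule cong_dvd_modulus) (simp add: le_imp_power_dvd)
      then show ?thesis using x(1) cong_trans by blast
    qed
    then show ?thesis using y unfolding P_def by blast
  qed
  have "P 0 t" using sol unfolding P_def by simp
  then obtain X where "\<forall>m. P m (X m) \<and> (\<forall>k. [X (Suc m) k = X m k] (mod p^(m+e+1)))"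
    using dependent_nat_choice[of P "\<lambda>m x y. \<forall>k. [y k = x k] (mod p^(m+e+1))"] step by blast
  then show ?thesis unfolding P_def by blast
qed

definition Q1_vec :: "int \<Rightarrow> (nat \<Rightarrow> int) \<Rightarrow> int" where
  "Q1_vec D t = Q1 D (t 0) (t 1) (t 2) (t 3) (t 4)"

definition Q2_vec :: "int \<Rightarrow> int \<Rightarrow> int \<Rightarrow> (nat \<Rightarrow> int) \<Rightarrow> int" where
  "Q2_vec D A B t = Q2 D A B (t 0) (t 1) (t 2) (t 3) (t 4)"

definition Q1_grad :: "int \<Rightarrow> (nat \<Rightarrow> int) \<Rightarrow> nat \<Rightarrow> int" where
  "Q1_grad D t k = [- t 1, - t 0, 2 * t 2, - 2 * D * t 3, 0] ! k"

definition Q2_grad :: "int \<Rightarrow> int \<Rightarrow> int \<Rightarrow> (nat \<Rightarrow> int) \<Rightarrow> nat \<Rightarrow> int" where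
  "Q2_grad D A B t k =
     [- (2 * t 0 + (A + B) * t 1), - ((A + B) * t 0 + 2 * A * B * t 1), 2 * t 2, 0, - 2 * D * t 4] ! k"

lemma ex_less_5: "(\<exists>k<5::nat. P k) \<longleftrightarrow> P 0 \<or> P 1 \<or> P 2 \<or> P 3 \<or> P 4"
  by (auto simp: less_Suc_eq numeral_eq_Suc)

definition has_primitive_solution_mod :: "int \<Rightarrow> int \<Rightarrow> int \<Rightarrow> int \<Rightarrow> int \<Rightarrow> bool" where
  "has_primitive_solution_mod p D A B M \<longleftrightarrow>
     (\<exists>t. (\<exists>k<5. \<not> p dvd t k) \<and> [Q1_vec D t = 0] (mod M) \<and> [Q2_vec D A B t = 0] (mod M))"

lemma sum_lessThan_5:
  fixes f :: "nat \<Rightarrow> int"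
  shows "(\<Sum>k<5. f k) = f 0 + f 1 + f 2 + f 3 + f 4"
  by (simp add: eval_nat_numeral)

lemma Q1_vec_polar:
  "Q1_vec D (\<lambda>k. t k + q * s k) = Q1_vec D t + q * (\<Sum>k<5. Q1_grad D t k * s k) + q^2 * Q1_vec D s"
  unfolding sum_lessThan_5 by (simp add: Q1_vec_def Q1_def Q1_grad_def algebra_simps power2_eq_square)

lemma Q2_vec_polar:
  "Q2_vec D A B (\<lambda>k. t k + q * s k)
     = Q2_vec D A B t + q * (\<Sum>k<5. Q2_grad D A B t k * s k) + q^2 * Q2_vec D A B s"
  unfolding sum_lessThan_5 by (simp add: Q2_vec_def Q2_def Q2_grad_def algebra_simps power2_eq_square)

lemma Q_grad_cong:
  assumes "k < 5" "\<And>k. [t' k = t k] (mod M)"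
  shows "[Q1_grad D t' k = Q1_grad D t k] (mod M) \<and> [Q2_grad D A B t' k = Q2_grad D A B t k] (mod M)"
proof -
  have "[t' 0 = t 0] (mod M)" "[t' 1 = t 1] (mod M)" "[t' 2 = t 2] (mod M)" "[t' 3 = t 3] (mod M)"
    "[t' 4 = t 4] (mod M)" using assms(2) by blast+
  moreover have "k = 0 \<or> k = 1 \<or> k = 2 \<or> k = 3 \<or> k = 4" using assms(1) by auto
  ultimately show ?thesis unfolding Q1_grad_def Q2_grad_def
    by (elim disjE) (auto intro!: cong_add cong_diff cong_mult cong_uminus)
qed

lemma Q1_cong:
  assumes "[x0 = y0] (mod M)" "[x1 = y1] (mod M)" "[x2 = y2] (mod M)" "[x3 = y3] (mod M)"
  shows "[Q1 D x0 x1 x2 x3 x4 = Q1 D y0 y1 y2 y3 y4] (mod M)"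
  unfolding Q1_def using assms by (intro cong_diff cong_mult cong_pow cong_refl)

lemma Q2_cong:
  assumes "[A' = A] (mod M)" "[B' = B] (mod M)" "[x0 = y0] (mod M)" "[x1 = y1] (mod M)"
    "[x2 = y2] (mod M)" "[x4 = y4] (mod M)"
  shows "[Q2 D A' B' x0 x1 x2 x3 x4 = Q2 D A B y0 y1 y2 y3 y4] (mod M)"
  unfolding Q2_def using assms by (intro cong_diff cong_mult cong_add cong_pow cong_refl)

lemma Q1_vec_cong: "(\<And>k. [t' k = t k] (mod M)) \<Longrightarrow> [Q1_vec D t' = Q1_vec D t] (mod M)"
  unfolding Q1_vec_def by (intro Q1_cong)

lemma Q2_vec_cong: "(\<And>k. [t' k = t k] (mod M)) \<Longrightarrow> [Q2_vec D A B t' = Q2_vec D A B t] (mod M)"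
  unfolding Q2_vec_def by (intro Q2_cong cong_refl)

lemma has_Qp_point_of_coherent_solutions:
  fixes X :: "nat \<Rightarrow> nat \<Rightarrow> int"
  assumes p: "prime p"
    and coherent: "\<And>m k. [X (Suc m) k = X m k] (mod p^m)"
    and sol: "\<And>m. [Q1_vec D (X m) = 0] (mod p^m)" "\<And>m. [Q2_vec D A B (X m) = 0] (mod p^m)"
    and nonzero: "i < 5" "\<not> p dvd X 1 i"
  shows "has_Qp_point p D A B"
proof -
  define t where "t k m = X m k mod p^m" for k m
  have t_cong: "[t k m = X m k] (mod p^m)" for k m unfolding t_def by simp
  have "padic_int p (t k)" for k
    unfolding padic_int_def
  proof (intro conjI allI)
    fix m
    show "0 \<le> t k m" "t k m < p^m" unfolding t_def using p by (simp_all add: prime_gt_0_int)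
    have "[t k (Suc m) = X (Suc m) k] (mod p^m)"
      using t_cong[of k "Suc m"] by (rule cong_dvd_modulus) (simp add: le_imp_power_dvd)
    then show "[t k (Suc m) = t k m] (mod p^m)"
      using coherent t_cong cong_sym cong_trans by meson
  qed
  moreover have "t i 1 \<noteq> 0" using nonzero(2) unfolding t_def by (simp add: dvd_eq_mod_eq_0)
  moreover have "[Q1 D (t 0 m) (t 1 m) (t 2 m) (t 3 m) (t 4 m) = 0] (mod p^m)" for m
    using Q1_vec_cong[of "\<lambda>k. t k m" "X m"] sol(1)[of m] t_cong cong_trans
    unfolding Q1_vec_def by blast
  moreover have "[Q2 D A B (t 0 m) (t 1 m) (t 2 m) (t 3 m) (t 4 m) = 0] (mod p^m)" for m
    using Q2_vec_cong[of "\<lambda>k. t k m" "X m"] sol(2)[of m] t_cong cong_trans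
    unfolding Q2_vec_def by blast
  ultimately show ?thesis unfolding has_Qp_point_def using nonzero(1) by blast
qed

lemma has_Qp_point_of_nonsingular_solution:
  assumes p: "prime p"
    and ij: "i < 5" "j < 5" "i \<noteq> j"
    and J: "p^e dvd jacobian_minor (Q1_grad D) (Q2_grad D A B) i j t"
      "\<not> p^(e+1) dvd jacobian_minor (Q1_grad D) (Q2_grad D A B) i j t"
    and sol: "[Q1_vec D t = 0] (mod p^(2*e+1))" "[Q2_vec D A B t = 0] (mod p^(2*e+1))"
    and primitive: "k < 5" "\<not> p dvd t k"
  shows "has_Qp_point p D A B"
proof -
  obtain X where X: "\<And>m. \<forall>k. [X m k = t k] (mod p^(e+1))"
      "\<And>m. \<forall>k. [X (Suc m) k = X m k] (mod p^(m+e+1))"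
      "\<And>m. [Q1_vec D (X m) = 0] (mod p^(m+2*e+1))" "\<And>m. [Q2_vec D A B (X m) = 0] (mod p^(m+2*e+1))"
    using quadratic_forms_Hensel[OF p Q1_vec_polar Q2_vec_polar Q_grad_cong ij J sol] by blast
  have weaken: "[x = y] (mod p^m)" if "[x = y] (mod p^(m+r))" for x y m r
    using that by (rule cong_dvd_modulus) (simp add: le_imp_power_dvd)
  show ?thesis
  proof (rule has_Qp_point_of_coherent_solutions[OF p, of X])
    show "[X (Suc m) k' = X m k'] (mod p^m)" for m k'
      using X(2) weaken[of _ _ m "e+1"] by (simp add: add.assoc)
    show "[Q1_vec D (X m) = 0] (mod p^m)" "[Q2_vec D A B (X m) = 0] (mod p^m)" for m
      using X(3,4) weaken[of _ _ m "2*e+1"] by (simp_all add: add.assoc)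
    have "[X 1 k = t k] (mod p)" using X(1) weaken[of _ _ 1 e] by (simp add: add.commute)
    then show "\<not> p dvd X 1 k" using primitive(2) cong_dvd_iff by blast
  qed (rule primitive(1))
qed

section \<open>Primitive solutions from Q_p-points\<close>

lemma padic_int_mod_power:
  assumes p: "p > 0" and x: "padic_int p x" and "n \<le> m"
  shows "x m mod p^n = x n"
proof -
  have "[x m = x n] (mod p^n)" using \<open>n \<le> m\<close>
  proof (induction m rule: dec_induct)
    case (step m)
    have "[x (Suc m) = x m] (mod p^m)" using x unfolding padic_int_def by blast
    then have "[x (Suc m) = x m] (mod p^n)"
      by (rule cong_dvd_modulus) (simp add: le_imp_power_dvd step.hyps)
    then show ?case using step.IH cong_trans by blast
  qed simp
  moreover have "x n mod p^n = x n" using x unfolding padic_int_def by simp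
  ultimately show ?thesis unfolding cong_def by simp
qed

lemma common_prime_power_factor:
  fixes p :: int and y :: "nat \<Rightarrow> int"
  assumes "i0 < n" "\<not> p^n0 dvd y i0"
  obtains k z i where "k < n0" "\<And>i. i < n \<Longrightarrow> y i = p^k * z i" "i < n" "\<not> p dvd z i"
proof -
  define P where "P k \<longleftrightarrow> (\<exists>i<n. \<not> p^(Suc k) dvd y i)" for k
  have "n0 \<noteq> 0" using assms(2) by (cases n0) auto
  then have "P (n0 - 1)" using assms unfolding P_def by auto
  define k where "k = (LEAST k. P k)"
  have Pk: "P k" and "k < n0" using \<open>P (n0 - 1)\<close> \<open>n0 \<noteq> 0\<close> Least_le[of P] LeastI[of P]
    unfolding k_def by force+
  have dvd: "p^k dvd y i" if "i < n" for i
  proof (cases k)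
    case (Suc k')
    then have "\<not> P k'" using not_less_Least[of k' P] unfolding k_def by simp
    then show ?thesis using that Suc unfolding P_def by blast
  qed simp
  obtain i where i: "i < n" "\<not> p^(Suc k) dvd y i" using Pk unfolding P_def by blast
  show ?thesis
  proof
    show "y i = p^k * (y i div p^k)" if "i < n" for i using dvd[OF that] by simp
    show "\<not> p dvd y i div p^k"
      using i dvd[OF i(1)] by (auto simp: dvd_div_iff_mult mult.commute)
  qed (use \<open>k < n0\<close> i in auto)
qed

lemma Q1_vec_scale: "Q1_vec D (\<lambda>i. c * z i) = c^2 * Q1_vec D z"
  unfolding Q1_vec_def Q1_def by (simp add: algebra_simps power2_eq_square)

lemma Q2_vec_scale: "Q2_vec D A B (\<lambda>i. c * z i) = c^2 * Q2_vec D A B z"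
  unfolding Q2_vec_def Q2_def by (simp add: algebra_simps power2_eq_square)

text \<open>The level L is chosen so that dividing out the square of the common power of p still
  leaves a solution modulo p^N.\<close>
lemma primitive_solution_of_has_Qp_point:
  assumes p: "prime p" and point: "has_Qp_point p D A B"
  shows "has_primitive_solution_mod p D A B (p^N)"
proof -
  have p0: "p > 0" using p prime_gt_0_int by blast
  obtain x :: "nat \<Rightarrow> nat \<Rightarrow> int" where x: "\<And>i. i < 5 \<Longrightarrow> padic_int p (x i)"
    and nonzero: "\<exists>i<5. \<exists>n. x i n \<noteq> 0"
    and sol1: "\<And>n. [Q1 D (x 0 n) (x 1 n) (x 2 n) (x 3 n) (x 4 n) = 0] (mod p^n)"
    and sol2: "\<And>n. [Q2 D A B (x 0 n) (x 1 n) (x 2 n) (x 3 n) (x 4 n) = 0] (mod p^n)"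
    using point unfolding has_Qp_point_def by blast
  obtain i0 n0 where i0: "i0 < 5" "x i0 n0 \<noteq> 0" using nonzero by blast
  define L where "L = N + 2 * n0"
  have "x i0 L mod p^n0 = x i0 n0" unfolding L_def using padic_int_mod_power[OF p0 x[OF i0(1)]] by simp
  then have "\<not> p^n0 dvd x i0 L" using i0(2) by (simp add: dvd_eq_mod_eq_0)
  then obtain k z i where k: "k < n0" and z: "\<And>i. i < 5 \<Longrightarrow> x i L = p^k * z i"
      and i: "i < 5" "\<not> p dvd z i"
    using common_prime_power_factor[OF i0(1), of p n0 "\<lambda>i. x i L"] by blast
  have "p^L = (p^k)^2 * p^(L - 2*k)" using k unfolding L_def
    by (simp add: power_add[symmetric] power_mult[symmetric] mult.commute)
  moreover have "p^N dvd p^(L - 2*k)" using k unfolding L_def by (simp add: le_imp_power_dvd)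
  moreover have "Q1 D (x 0 L) (x 1 L) (x 2 L) (x 3 L) (x 4 L) = (p^k)^2 * Q1_vec D z"
    "Q2 D A B (x 0 L) (x 1 L) (x 2 L) (x 3 L) (x 4 L) = (p^k)^2 * Q2_vec D A B z"
    using Q1_vec_scale[of D "p^k" z] Q2_vec_scale[of D A B "p^k" z]
    by (simp_all add: Q1_vec_def Q2_vec_def z)
  ultimately have "p^N dvd Q1_vec D z" "p^N dvd Q2_vec D A B z"
    using sol1[of L] sol2[of L] p0 by (auto simp: cong_0_iff intro: dvd_trans)
  then show ?thesis unfolding has_primitive_solution_mod_def using i by (auto simp: cong_0_iff)
qed

section \<open>Primitive solutions have a Jacobian minor of small valuation\<close>

lemma G_eq: "G A B = (A + B - 1)^2 - 4 * A * B"
  unfolding G_def by (simp add: algebra_simps power2_eq_square)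

lemma dvd_mult_G_of_minors:
  fixes P a b c A B :: int
  assumes "P dvd c * (2*a + (A+B-1)*b)" "P dvd c * ((A+B-1)*a + 2*A*B*b)"
  shows "P dvd c * a * G A B" "P dvd c * b * G A B"
proof -
  have "c * a * G A B = (A+B-1) * (c * ((A+B-1)*a + 2*A*B*b)) - 2*A*B * (c * (2*a + (A+B-1)*b))"
    "c * b * G A B = (A+B-1) * (c * (2*a + (A+B-1)*b)) - 2 * (c * ((A+B-1)*a + 2*A*B*b))"
    unfolding G_eq by (simp_all add: algebra_simps power2_eq_square)
  then show "P dvd c * a * G A B" "P dvd c * b * G A B" using assms by simp_all
qed

lemma coprime_cancel_prime_power:
  fixes p x u :: int
  assumes "prime p" "p^m dvd x * u" "\<not> p dvd u"
  shows "p^m dvd x"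
  using prime_power_dvd_mult_cancel_right[of p m 0 x u] assms by simp

lemma prime_dvd_c_of_dvd_a:
  fixes p D a b c d f :: int
  assumes p: "prime p" and "p dvd D" "p dvd a" "p dvd Q1 D a b c d f"
  shows "p dvd c"
proof -
  have "c^2 = Q1 D a b c d f + D * d^2 + a * b" unfolding Q1_def by simp
  then have "p dvd c^2" using assms by simp
  then show ?thesis using p prime_dvd_power by blast
qed

lemma prime_dvd_d_f_of_dvd_a_b_c:
  fixes p D A B a b c d f :: int
  assumes p: "prime p" and D: "\<not> p^2 dvd D" and abc: "p dvd a" "p dvd b" "p dvd c"
    and q: "p^2 dvd Q1 D a b c d f" "p^2 dvd Q2 D A B a b c d f"
  shows "p dvd d" "p dvd f"
proof -
  have sq: "p^2 dvd x * y" if "p dvd x" "p dvd y" for x y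
    using that by (simp add: power2_eq_square mult_dvd_mono)
  have "D * d^2 = c * c - a * b - Q1 D a b c d f" "D * f^2 = c * c - (a + A*b) * (a + B*b) - Q2 D A B a b c d f"
    unfolding Q1_def Q2_def by (simp_all add: power2_eq_square)
  moreover have "p^2 dvd c * c" "p^2 dvd a * b" "p^2 dvd (a + A*b) * (a + B*b)"
    using sq abc by auto
  ultimately have "p^2 dvd D * d^2" "p^2 dvd D * f^2" using q by (simp_all add: dvd_diff)
  then have "p^(1+1) dvd d^2 * D" "p^(1+1) dvd f^2 * D" by (simp_all only: one_add_one mult.commute)
  moreover have "\<not> p^(Suc 1) dvd D" using D by (simp only: Suc_1 simp_thms)
  ultimately have "p^1 dvd d^2" "p^1 dvd f^2"
    using prime_power_dvd_mult_cancel_right[OF p] by blast+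
  then show "p dvd d" "p dvd f" using p prime_dvd_power by (metis power_one_right)+
qed

lemma Q2_root_factor_dvd:
  fixes p D A B a b c d f :: int and l :: nat
  assumes p: "prime p" and pD: "p dvd D" and l_pos: "l \<ge> 1"
    and c: "p^(3*l+1) dvd c" and f: "p^(4*l) dvd f" and q2: "p^(8*l+1) dvd Q2 D A B a b c d f"
  shows "p^(3*l+1) dvd a + A*b \<or> p^(3*l+1) dvd a + B*b"
proof -
  have le: "2*(3*l+1) \<le> 8*l+1" using l_pos by simp
  have "(a + A*b) * (a + B*b) = c * c - D * (f * f) - Q2 D A B a b c d f"
    unfolding Q2_def by (simp add: power2_eq_square)
  moreover have "p^(2*(3*l+1)) dvd c * c"
    using c mult_dvd_mono by (metis mult_2 power_add)
  moreover have "p^(2*(3*l+1)) dvd D * (f * f)"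
  proof -
    have "p * (p^(4*l) * p^(4*l)) dvd D * (f * f)" using pD f by (simp add: mult_dvd_mono)
    then have "p^(8*l+1) dvd D * (f * f)" by (simp add: power_add[symmetric] mult.commute)
    then show ?thesis using le by (rule power_le_dvd)
  qed
  moreover have "p^(2*(3*l+1)) dvd Q2 D A B a b c d f"
    using q2 le by (rule power_le_dvd)
  ultimately have "p^(2*(3*l+1)) dvd (a + A*b) * (a + B*b)" by (simp only: dvd_diff)
  then show ?thesis by (rule prime_power_double_dvd_mult[OF p])
qed

lemma root_factor_impossible:
  fixes p a b A B :: int and l :: nat
  assumes p: "prime p"
    and root: "p^(3*l+1) dvd a + A*b" and minor: "p^(3*l+1) dvd A*B*b^2 - a^2"
    and ab: "\<not> (p dvd a \<and> p dvd b)" and nA: "\<not> p^(l+1) dvd A" and nAB: "\<not> p^(l+1) dvd A - B"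
  shows False
proof -
  have "\<not> p dvd b"
  proof
    assume "p dvd b"
    moreover have "p dvd a + A*b" using power_le_dvd[OF root, of 1] by simp
    ultimately show False using ab by (metis dvd_add_left_iff dvd_mult2 mult.commute)
  qed
  then have "\<not> p dvd b^2" using p prime_dvd_power by blast
  have "A * (A - B) * b^2 = (a + A*b) * (A*b - a) - (A*B*b^2 - a^2)"
    by (simp add: algebra_simps power2_eq_square)
  then have "p^(3*l+1) dvd A * (A - B) * b^2" using root minor by (simp add: dvd_diff)
  then have "p^(3*l+1) dvd A * (A - B)"
    using coprime_cancel_prime_power[OF p] \<open>\<not> p dvd b^2\<close> by blast
  moreover have "3*l+1 = (2*l+1) + l" by simp
  ultimately have "p^((2*l+1) + l) dvd A * (A - B)" by metis
  moreover have "\<not> p^(Suc l) dvd A - B" using nAB by (simp only: Suc_eq_plus1 simp_thms)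
  ultimately have "p^(2*l+1) dvd A" by (rule prime_power_dvd_mult_cancel_right[OF p])
  then show False using nA power_le_dvd[of p "2*l+1" A "l+1"] by simp
qed

lemma highly_divisible_c_f_impossible:
  fixes p D A B a b c d f :: int and l :: nat
  assumes p: "prime p" and pD: "p dvd D" and pD2: "\<not> p^2 dvd D" and l_pos: "l \<ge> 1"
    and nA: "\<not> p^(l+1) dvd A" and nB: "\<not> p^(l+1) dvd B" and nAB: "\<not> p^(l+1) dvd A - B"
    and ab: "\<not> (p dvd a \<and> p dvd b)" and q2: "p^(8*l+1) dvd Q2 D A B a b c d f"
    and minor: "p^(3*l+1) dvd A*B*b^2 - a^2"
    and c: "p^(3*l+1) dvd c" and Df: "p^(4*l+1) dvd D * f"
  shows False
proof -
  have "p^(4*l+1) dvd f * D" using Df by (simp only: mult.commute)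
  moreover have "\<not> p^(Suc 1) dvd D" using pD2 by (simp only: Suc_1 simp_thms)
  ultimately have f: "p^(4*l) dvd f" by (rule prime_power_dvd_mult_cancel_right[OF p])
  have nBA: "\<not> p^(l+1) dvd B - A" using nAB by (metis dvd_minus_iff minus_diff_eq)
  have minor': "p^(3*l+1) dvd B*A*b^2 - a^2" using minor by (simp only: mult.commute)
  from Q2_root_factor_dvd[OF p pD l_pos c f q2] show False
  proof
    assume "p^(3*l+1) dvd a + A*b"
    then show False using root_factor_impossible[OF p _ minor ab nA nAB] by blast
  next
    assume "p^(3*l+1) dvd a + B*b"
    then show False using root_factor_impossible[OF p _ minor' ab nB nBA] by blast
  qed
qed

lemma small_minors_impossible:
  fixes p D A B a b c d f :: int and l :: nat
  assumes p: "prime p" and pD: "p dvd D" and pD2: "\<not> p^2 dvd D" and l_pos: "l \<ge> 1"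
    and nA: "\<not> p^(l+1) dvd A" and nB: "\<not> p^(l+1) dvd B" and nAB: "\<not> p^(l+1) dvd A - B"
    and nG: "\<not> p^(l+1) dvd G A B"
    and primitive: "\<not> (p dvd a \<and> p dvd b \<and> p dvd c \<and> p dvd d \<and> p dvd f)"
    and q1: "p^(8*l+1) dvd Q1 D a b c d f" and q2: "p^(8*l+1) dvd Q2 D A B a b c d f"
    and m01: "p^(4*l+1) dvd A*B*b^2 - a^2"
    and m02: "p^(4*l+1) dvd c * (2*a + (A+B-1)*b)"
    and m12: "p^(4*l+1) dvd c * ((A+B-1)*a + 2*A*B*b)"
    and m04: "p^(4*l+1) dvd D * f * b" and m14: "p^(4*l+1) dvd D * f * a"
  shows False
proof -
  have cancel_G: "p^(3*l+1) dvd x" if "p^(4*l+1) dvd x * G A B" for x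
    using prime_power_dvd_mult_cancel_right[OF p, of "3*l+1" l x "G A B"] that nG by simp
  have ca: "p^(3*l+1) dvd c * a" and cb: "p^(3*l+1) dvd c * b"
    using dvd_mult_G_of_minors[OF m02 m12] cancel_G by blast+
  show False
  proof (cases "p dvd c")
    case False
    then have "p^(3*l+1) dvd a" using coprime_cancel_prime_power[OF p, of "3*l+1" a c] ca
      by (simp add: mult.commute)
    then have "p dvd a" using power_le_dvd[of p "3*l+1" a 1] by simp
    moreover have "p dvd Q1 D a b c d f" using power_le_dvd[OF q1, of 1] by simp
    ultimately show False using prime_dvd_c_of_dvd_a[OF p pD] False by blast
  next
    case True
    show False
    proof (cases "p dvd a \<and> p dvd b")
      case True
      have q: "p^2 dvd Q1 D a b c d f" "p^2 dvd Q2 D A B a b c d f"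
        using power_le_dvd[OF q1, of 2] power_le_dvd[OF q2, of 2] l_pos by simp_all
      have "p dvd a" "p dvd b" using True by blast+
      then have "p dvd d" "p dvd f" using prime_dvd_d_f_of_dvd_a_b_c[OF p pD2 _ _ \<open>p dvd c\<close> q] by blast+
      then show False using primitive True \<open>p dvd c\<close> by blast
    next
      case False
      then obtain u where u: "\<not> p dvd u" "p^(4*l+1) dvd D * f * u" "p^(3*l+1) dvd c * u"
        using m04 m14 ca cb by blast
      have "p^(3*l+1) dvd A*B*b^2 - a^2" using m01 by (rule power_le_dvd) simp
      then show False
        using highly_divisible_c_f_impossible[OF p pD pD2 l_pos nA nB nAB False q2]
          coprime_cancel_prime_power[OF p u(3) u(1)] coprime_cancel_prime_power[OF p u(2) u(1)]
        by blast
    qed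
  qed
qed

lemma has_primitive_solution_mod_iff_coords:
  "has_primitive_solution_mod p D A B M \<longleftrightarrow>
    (\<exists>t0 t1 t2 t3 t4. \<not> (p dvd t0 \<and> p dvd t1 \<and> p dvd t2 \<and> p dvd t3 \<and> p dvd t4) \<and>
      [Q1 D t0 t1 t2 t3 t4 = 0] (mod M) \<and> [Q2 D A B t0 t1 t2 t3 t4 = 0] (mod M))"
  (is "?lhs \<longleftrightarrow> ?rhs")
proof
  assume ?lhs
  then show ?rhs unfolding has_primitive_solution_mod_def ex_less_5 Q1_vec_def Q2_vec_def by blast
next
  assume ?rhs
  then obtain t0 t1 t2 t3 t4 where "\<not> (p dvd t0 \<and> p dvd t1 \<and> p dvd t2 \<and> p dvd t3 \<and> p dvd t4)"
    "[Q1 D t0 t1 t2 t3 t4 = 0] (mod M)" "[Q2 D A B t0 t1 t2 t3 t4 = 0] (mod M)" by blast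
  then show ?lhs unfolding has_primitive_solution_mod_def ex_less_5 Q1_vec_def Q2_vec_def
    by (intro exI[of _ "(!) [t0, t1, t2, t3, t4]"]) simp
qed

lemma primitive_solution_has_nonsingular_minor:
  fixes p D A B :: int and l :: nat and t :: "nat \<Rightarrow> int"
  assumes p: "prime p" and p2: "p \<noteq> 2" and pD: "p dvd D" and pD2: "\<not> p^2 dvd D" and l_pos: "l \<ge> 1"
    and nA: "\<not> p^(l+1) dvd A" and nB: "\<not> p^(l+1) dvd B" and nAB: "\<not> p^(l+1) dvd A - B"
    and nG: "\<not> p^(l+1) dvd G A B"
    and primitive: "\<exists>k<5. \<not> p dvd t k"
    and sol: "p^(8*l+1) dvd Q1_vec D t" "p^(8*l+1) dvd Q2_vec D A B t"
  shows "\<exists>i<5. \<exists>j<5. i \<noteq> j \<and> \<not> p^(4*l+1) dvd jacobian_minor (Q1_grad D) (Q2_grad D A B) i j t"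
proof (rule ccontr)
  define M where "M i j = jacobian_minor (Q1_grad D) (Q2_grad D A B) i j t" for i j
  assume "\<not> ?thesis"
  then have small: "p^(4*l+1) dvd x" if "M i j = 2 * x" "i < 5" "j < 5" "i \<noteq> j" for i j x
    using that odd_prime_power_dvd_double[OF p p2] unfolding M_def by metis
  have "M 0 1 = 2 * (A*B*t 1^2 - t 0^2)"
    "M 0 2 = 2 * (t 2 * (2*t 0 + (A+B-1)*t 1))"
    "M 1 2 = 2 * (t 2 * ((A+B-1)*t 0 + 2*A*B*t 1))"
    "M 0 4 = 2 * (D * t 4 * t 1)" "M 1 4 = 2 * (D * t 4 * t 0)"
    unfolding M_def jacobian_minor_def Q1_grad_def Q2_grad_def
    by (simp_all add: algebra_simps power2_eq_square)
  then have minors: "p^(4*l+1) dvd A*B*t 1^2 - t 0^2"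
    "p^(4*l+1) dvd t 2 * (2*t 0 + (A+B-1)*t 1)" "p^(4*l+1) dvd t 2 * ((A+B-1)*t 0 + 2*A*B*t 1)"
    "p^(4*l+1) dvd D * t 4 * t 1" "p^(4*l+1) dvd D * t 4 * t 0"
    using small by simp_all
  from primitive have "\<not> (p dvd t 0 \<and> p dvd t 1 \<and> p dvd t 2 \<and> p dvd t 3 \<and> p dvd t 4)"
    unfolding ex_less_5 by blast
  then show False
    using small_minors_impossible[OF p pD pD2 l_pos nA nB nAB nG _ _ _ minors] sol
    unfolding Q1_vec_def Q2_vec_def by blast
qed

lemma has_Qp_point_iff_primitive_solution_mod:
  fixes p D A B :: int and l :: nat
  assumes p: "prime p" and p2: "p \<noteq> 2" and pD: "p dvd D" and pD2: "\<not> p^2 dvd D" and l_pos: "l \<ge> 1"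
    and nA: "\<not> p^(l+1) dvd A" and nB: "\<not> p^(l+1) dvd B" and nAB: "\<not> p^(l+1) dvd A - B"
    and nG: "\<not> p^(l+1) dvd G A B"
  shows "has_Qp_point p D A B \<longleftrightarrow> has_primitive_solution_mod p D A B (p^(8*l+1))"
proof
  assume "has_Qp_point p D A B"
  then show "has_primitive_solution_mod p D A B (p^(8*l+1))"
    by (rule primitive_solution_of_has_Qp_point[OF p])
next
  assume "has_primitive_solution_mod p D A B (p^(8*l+1))"
  then obtain t k where primitive: "k < 5" "\<not> p dvd t k"
    and sol: "p^(8*l+1) dvd Q1_vec D t" "p^(8*l+1) dvd Q2_vec D A B t"
    unfolding has_primitive_solution_mod_def cong_0_iff by blast
  obtain i j where ij: "i < 5" "j < 5" "i \<noteq> j"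
    and minor: "\<not> p^(4*l+1) dvd jacobian_minor (Q1_grad D) (Q2_grad D A B) i j t"
    using primitive_solution_has_nonsingular_minor[OF p p2 pD pD2 l_pos nA nB nAB nG _ sol] primitive
    by blast
  obtain e where "e \<le> 4*l" and e: "p^e dvd jacobian_minor (Q1_grad D) (Q2_grad D A B) i j t"
      "\<not> p^(e+1) dvd jacobian_minor (Q1_grad D) (Q2_grad D A B) i j t"
    using exact_power_dvd_exists[OF p minor] by blast
  then have "2*e+1 \<le> 8*l+1" by simp
  then have "p^(2*e+1) dvd Q1_vec D t" "p^(2*e+1) dvd Q2_vec D A B t"
    using sol power_le_dvd by blast+
  then show "has_Qp_point p D A B"
    using has_Qp_point_of_nonsingular_solution[OF p ij e _ _ primitive] by (simp add: cong_0_iff)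
qed

lemma R_set_iff_primitive_solution_mod:
  fixes p D A B :: int and l :: nat
  defines "M \<equiv> p^(8*l+1)"
  assumes p: "prime p"
    and nA: "\<not> p^(l+1) dvd A" and nB: "\<not> p^(l+1) dvd B" and nAB: "\<not> p^(l+1) dvd A - B"
    and nG: "\<not> p^(l+1) dvd G A B"
  shows "(A mod M, B mod M) \<in> R_set D p l \<longleftrightarrow> has_primitive_solution_mod p D A B M"
proof -
  have congs_AB: "[A mod M = A] (mod M)" "[B mod M = B] (mod M)" by simp_all
  then have congs: "[A mod M - B mod M = A - B] (mod M)" "[G (A mod M) (B mod M) = G A B] (mod M)"
    "\<And>t. [Q2_vec D (A mod M) (B mod M) t = Q2_vec D A B t] (mod M)"
    unfolding G_def Q2_vec_def by (auto intro!: cong_add cong_diff cong_mult cong_pow Q2_cong)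
  have "p^(l+1) dvd M" unfolding M_def by (simp add: le_imp_power_dvd)
  then have transfer: "p^(l+1) dvd x \<longleftrightarrow> p^(l+1) dvd y" if "[x = y] (mod M)" for x y
    using cong_dvd_iff cong_dvd_modulus that by blast
  have reduced: "\<not> p^(l+1) dvd A mod M" "\<not> p^(l+1) dvd B mod M"
    "\<not> p^(l+1) dvd A mod M - B mod M" "\<not> p^(l+1) dvd G (A mod M) (B mod M)"
    using nA nB nAB nG transfer[OF congs_AB(1)] transfer[OF congs_AB(2)] transfer[OF congs(1)]
      transfer[OF congs(2)] by blast+
  have "0 < M" unfolding M_def using p by (simp add: prime_gt_0_int)
  then have "(A mod M, B mod M) \<in> R_set D p l \<longleftrightarrow> has_primitive_solution_mod p D (A mod M) (B mod M) M"
    using reduced unfolding R_set_def has_primitive_solution_mod_iff_coords M_def[symmetric] Let_def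
    by simp
  also have "\<dots> \<longleftrightarrow> has_primitive_solution_mod p D A B M"
    unfolding has_primitive_solution_mod_def using congs(3) cong_trans cong_sym by meson
  finally show ?thesis .
qed

theorem lemma2p4:
  fixes D p A B :: int and l :: nat
  assumes "\<not> (\<exists>k. D = k^2)"
    and "prime p" and "p \<noteq> 2" and "p dvd D" and "\<not> p^2 dvd D"
    and "l \<ge> 1"
    and "\<not> p^(l+1) dvd A" and "\<not> p^(l+1) dvd B" and "\<not> p^(l+1) dvd (A - B)"
    and "\<not> p^(l+1) dvd G A B"
  shows "has_Qp_point p D A B \<longleftrightarrow> (A mod p^(8*l+1), B mod p^(8*l+1)) \<in> R_set D p l"
proof -
  have "has_Qp_point p D A B \<longleftrightarrow> has_primitive_solution_mod p D A B (p^(8*l+1))"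
    using has_Qp_point_iff_primitive_solution_mod assms(2-10) by blast
  also have "\<dots> \<longleftrightarrow> (A mod p^(8*l+1), B mod p^(8*l+1)) \<in> R_set D p l"
    using R_set_iff_primitive_solution_mod assms(2,7-10) by blast
  finally show ?thesis .
qed

end
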